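(* Let $V$ be a vector space of dimension $2r$ ($r\ge1$) over $\mathbb{F}_2$ with nondegenerate quadratic form $Q$. (i) If $Q$ is hyperbolic and $r\equiv 0$ or $1\pmod 4$, then $V$ has a symmetric basis. (ii) If $Q$ is elliptic and $r\equiv 2$ or $3\pmod 4$, then $V$ has a symmetric basis.
   Context: The associated bilinear form of $Q$ is $B(u,v)=Q(u+v)-Q(u)-Q(v)$, and $Q$ is nondegenerate if $B$ is. $Q$ on a $2r$-dimensional space is hyperbolic if $V$ has a basis $e_1,\dots,e_r,f_1,\dots,f_r$ with $Q(e_i)=Q(f_i)=0$, $B(e_i,e_j)=B(f_i,f_j)=0$, $B(e_i,f_j)=\delta_{ij}$; it is elliptic if $V$ has a basis $e_1,\dots,e_{r-1},f_1,\dots,f_{r-1},x,y$ with the same relations among the $e_i,f_i$, all $e_i,f_i$ orthogonal to $x,y$, $Q(x)=1$, $B(x,y)=1$, $Q(y)=\zeta$ where $X^2+X+\zeta$ is irreducible over $\mathbb{F}_2$ (i.e. $\zeta=1$). A basis $\{v_1,\dots,v_{2r}\}$ is symmetric if $Q(v_i)=0$ for all $i$ and $B(v_i,v_j)=1$ for all $i\neq j$. *)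

theory Defs
  imports Main "HOL.Vector_Spaces" "HOL-Library.Z2"
begin

definition assoc_bilinear :: "('v::ab_group_add \<Rightarrow> bit) \<Rightarrow> 'v \<Rightarrow> 'v \<Rightarrow> bit" where
  "assoc_bilinear Q u v = Q (u + v) - Q u - Q v"

definition quadratic_form :: "(bit \<Rightarrow> 'v::ab_group_add \<Rightarrow> 'v) \<Rightarrow> ('v \<Rightarrow> bit) \<Rightarrow> bool" where
  "quadratic_form scale Q \<longleftrightarrow>
     (\<forall>a v. Q (scale a v) = a^2 * Q v) \<and>
     (\<forall>u w v. assoc_bilinear Q (u + w) v = assoc_bilinear Q u v + assoc_bilinear Q w v) \<and>
     (\<forall>u w v. assoc_bilinear Q v (u + w) = assoc_bilinear Q v u + assoc_bilinear Q v w) \<and>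
     (\<forall>a u v. assoc_bilinear Q (scale a u) v = a * assoc_bilinear Q u v) \<and>
     (\<forall>a u v. assoc_bilinear Q u (scale a v) = a * assoc_bilinear Q u v)"

definition nondegenerate :: "('v::ab_group_add \<Rightarrow> bit) \<Rightarrow> bool" where
  "nondegenerate Q \<longleftrightarrow> (\<forall>u. (\<forall>v. assoc_bilinear Q u v = 0) \<longrightarrow> u = 0)"

definition is_basis_family :: "(bit \<Rightarrow> 'v::ab_group_add \<Rightarrow> 'v) \<Rightarrow> nat \<Rightarrow> (nat \<Rightarrow> 'v) \<Rightarrow> bool" where
  "is_basis_family scale n w \<longleftrightarrow>
     inj_on w {..<n} \<and>
     \<not> module.dependent scale (w ` {..<n}) \<and>
     module.span scale (w ` {..<n}) = UNIV"

text \<open>Hyperbolic: basis e_1..e_r, f_1..f_r (indexed 0..r-1 here).\<close>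
definition hyperbolic :: "(bit \<Rightarrow> 'v::ab_group_add \<Rightarrow> 'v) \<Rightarrow> nat \<Rightarrow> ('v \<Rightarrow> bit) \<Rightarrow> bool" where
  "hyperbolic scale r Q \<longleftrightarrow>
     (\<exists>e f :: nat \<Rightarrow> 'v.
        is_basis_family scale (2*r) (\<lambda>i. if i < r then e i else f (i - r)) \<and>
        (\<forall>i<r. Q (e i) = 0 \<and> Q (f i) = 0) \<and>
        (\<forall>i<r. \<forall>j<r. assoc_bilinear Q (e i) (e j) = 0 \<and> assoc_bilinear Q (f i) (f j) = 0 \<and>
                   assoc_bilinear Q (e i) (f j) = (if i = j then 1 else 0)))"

text \<open>Elliptic: basis e_1..e_{r-1}, f_1..f_{r-1}, x, y (zeta = 1 over F_2).\<close>
definition elliptic :: "(bit \<Rightarrow> 'v::ab_group_add \<Rightarrow> 'v) \<Rightarrow> nat \<Rightarrow> ('v \<Rightarrow> bit) \<Rightarrow> bool" where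
  "elliptic scale r Q \<longleftrightarrow>
     (\<exists>(e :: nat \<Rightarrow> 'v) f x y.
        is_basis_family scale (2*r)
          (\<lambda>i. if i < r - 1 then e i else if i < 2*(r - 1) then f (i - (r - 1))
               else if i = 2*(r - 1) then x else y) \<and>
        (\<forall>i<r-1. Q (e i) = 0 \<and> Q (f i) = 0) \<and>
        (\<forall>i<r-1. \<forall>j<r-1. assoc_bilinear Q (e i) (e j) = 0 \<and> assoc_bilinear Q (f i) (f j) = 0 \<and>
                   assoc_bilinear Q (e i) (f j) = (if i = j then 1 else 0)) \<and>
        (\<forall>i<r-1. assoc_bilinear Q (e i) x = 0 \<and> assoc_bilinear Q (e i) y = 0 \<and>
                 assoc_bilinear Q (f i) x = 0 \<and> assoc_bilinear Q (f i) y = 0) \<and>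
        Q x = 1 \<and> assoc_bilinear Q x y = 1 \<and> Q y = 1)"

definition has_symmetric_basis :: "(bit \<Rightarrow> 'v::ab_group_add \<Rightarrow> 'v) \<Rightarrow> nat \<Rightarrow> ('v \<Rightarrow> bit) \<Rightarrow> bool" where
  "has_symmetric_basis scale n Q \<longleftrightarrow>
     (\<exists>v :: nat \<Rightarrow> 'v. is_basis_family scale n v \<and>
        (\<forall>i<n. Q (v i) = 0) \<and>
        (\<forall>i<n. \<forall>j<n. i \<noteq> j \<longrightarrow> assoc_bilinear Q (v i) (v j) = 1))"

end

theory Submission
  imports Defs "HOL-Combinatorics.Transposition"
begin

text \<open>Over \<open>\<bbbF>\<^sub>2\<close>, mutually orthogonal planes that alternate hyperbolic, elliptic,
  hyperbolic, \<dots> give a symmetric family: shift both vectors of the \<open>b\<close>-th plane by the sum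
  of all earlier planes. Since \<open>H \<perp> H \<cong> E \<perp> E\<close>, every block of four hyperbolic planes can be
  rewritten as \<open>H \<perp> E \<perp> H \<perp> E\<close>; under the stated congruences on \<open>r\<close> the at most three
  remaining planes then fit the alternating pattern. An even number of vectors pairing to \<open>1\<close>
  with each other is linearly independent, so \<open>2r = dim V\<close> of them form a basis.\<close>

declare add_bit_eq_xor[simp del] mult_bit_eq_and[simp del]

lemma bit_add_self [simp]: "(x::bit) + x = 0"
  by (cases x) auto

lemma of_nat_bit: "(of_nat n :: bit) = (if even n then 0 else 1)"
  by (induction n) auto

lemma assoc_bilinear_commute: "assoc_bilinear Q u v = assoc_bilinear Q v u"
  unfolding assoc_bilinear_def by (simp add: add.commute)

text \<open>The \<open>b\<close>-th plane is spanned by \<open>p b, q b\<close>; it is hyperbolic if \<open>c b = 0\<close> and elliptic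
  if \<open>c b = 1\<close>.\<close>
definition orthogonal_planes ::
    "('v::ab_group_add \<Rightarrow> bit) \<Rightarrow> nat \<Rightarrow> (nat \<Rightarrow> bit) \<Rightarrow> (nat \<Rightarrow> 'v) \<Rightarrow> (nat \<Rightarrow> 'v) \<Rightarrow> bool" where
  "orthogonal_planes Q n c p q \<longleftrightarrow>
     (\<forall>b<n. assoc_bilinear Q (p b) (q b) = 1 \<and> Q (p b) = c b \<and> Q (q b) = c b) \<and>
     (\<forall>b<n. \<forall>d<n. b \<noteq> d \<longrightarrow> assoc_bilinear Q (p b) (p d) = 0 \<and>
        assoc_bilinear Q (p b) (q d) = 0 \<and> assoc_bilinear Q (q b) (q d) = 0)"

lemma orthogonal_planes_cong:
  assumes "orthogonal_planes Q n c p q" "\<And>b. b < n \<Longrightarrow> c b = c' b"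
  shows "orthogonal_planes Q n c' p q"
  using assms unfolding orthogonal_planes_def by simp

lemma orthogonal_planes_reindex:
  assumes planes: "orthogonal_planes Q n c p q" and \<sigma>: "inj_on \<sigma> {..<n}" "\<sigma> ` {..<n} \<subseteq> {..<n}"
  shows "orthogonal_planes Q n (c \<circ> \<sigma>) (p \<circ> \<sigma>) (q \<circ> \<sigma>)"
proof -
  have "\<sigma> b < n" if "b < n" for b
    using \<sigma>(2) that by auto
  moreover have "\<sigma> b \<noteq> \<sigma> d" if "b < n" "d < n" "b \<noteq> d" for b d
    using inj_onD[OF \<sigma>(1)] that by blast
  ultimately show ?thesis
    using planes unfolding orthogonal_planes_def comp_def by meson
qed

lemma hyperbolic_orthogonal_planes:
  assumes "hyperbolic scale r Q"
  shows "\<exists>p q. orthogonal_planes Q r (\<lambda>_. 0) p q"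
proof -
  obtain e f where "\<forall>i<r. Q (e i) = 0 \<and> Q (f i) = 0"
    "\<forall>i<r. \<forall>j<r. assoc_bilinear Q (e i) (e j) = 0 \<and> assoc_bilinear Q (f i) (f j) = 0 \<and>
      assoc_bilinear Q (e i) (f j) = (if i = j then 1 else 0)"
    using assms unfolding hyperbolic_def by blast
  then have "orthogonal_planes Q r (\<lambda>_. 0) e f"
    unfolding orthogonal_planes_def by simp
  then show ?thesis by blast
qed

lemma elliptic_orthogonal_planes:
  assumes "elliptic scale r Q" "r \<ge> 1"
  shows "\<exists>p q. orthogonal_planes Q r (\<lambda>b. if b = r - 1 then 1 else 0) p q"
proof -
  from assms(1) obtain e f x y where
    Q_ef: "\<forall>i<r-1. Q (e i) = 0 \<and> Q (f i) = 0"
    and hyp: "\<forall>i<r-1. \<forall>j<r-1. assoc_bilinear Q (e i) (e j) = 0 \<and> assoc_bilinear Q (f i) (f j) = 0 \<and>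
      assoc_bilinear Q (e i) (f j) = (if i = j then 1 else 0)"
    and orth: "\<forall>i<r-1. assoc_bilinear Q (e i) x = 0 \<and> assoc_bilinear Q (e i) y = 0 \<and>
      assoc_bilinear Q (f i) x = 0 \<and> assoc_bilinear Q (f i) y = 0"
    and xy: "Q x = 1" "assoc_bilinear Q x y = 1" "Q y = 1"
    unfolding elliptic_def by (elim exE conjE) blast
  have "orthogonal_planes Q r (\<lambda>b. if b = r - 1 then 1 else 0) (e(r - 1 := x)) (f(r - 1 := y))"
    unfolding orthogonal_planes_def
  proof (intro conjI allI impI)
    fix b assume "b < r"
    then show "assoc_bilinear Q ((e(r - 1 := x)) b) ((f(r - 1 := y)) b) = 1"
      "Q ((e(r - 1 := x)) b) = (if b = r - 1 then 1 else 0)"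
      "Q ((f(r - 1 := y)) b) = (if b = r - 1 then 1 else 0)"
      using Q_ef hyp xy by auto
  next
    fix b d assume "b < r" "d < r" "b \<noteq> d"
    then show "assoc_bilinear Q ((e(r - 1 := x)) b) ((e(r - 1 := x)) d) = 0"
      "assoc_bilinear Q ((e(r - 1 := x)) b) ((f(r - 1 := y)) d) = 0"
      "assoc_bilinear Q ((f(r - 1 := y)) b) ((f(r - 1 := y)) d) = 0"
      using hyp orth by (auto simp: assoc_bilinear_commute[of Q x] assoc_bilinear_commute[of Q y])
  qed
  then show ?thesis by blast
qed

definition interleave :: "(nat \<Rightarrow> 'a) \<Rightarrow> (nat \<Rightarrow> 'a) \<Rightarrow> nat \<Rightarrow> 'a" where
  "interleave p q k = (if even k then p (k div 2) else q (k div 2))"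

locale quadratic_space = vector_space scale
  for scale :: "bit \<Rightarrow> 'v::ab_group_add \<Rightarrow> 'v" +
  fixes Q :: "'v \<Rightarrow> bit"
  assumes quadratic_form: "quadratic_form scale Q"
begin

abbreviation B :: "'v \<Rightarrow> 'v \<Rightarrow> bit" where "B \<equiv> assoc_bilinear Q"

lemma B_add_left: "B (u + w) v = B u v + B w v"
  and B_add_right: "B v (u + w) = B v u + B v w"
  and B_scale_left: "B (scale a u) v = a * B u v"
  using quadratic_form unfolding quadratic_form_def by blast+

lemma Q_zero [simp]: "Q 0 = 0"
  using quadratic_form scale_zero_left[of 0] unfolding quadratic_form_def
  by (metis mult_zero_left zero_power2)

lemma B_self [simp]: "B x x = 0"
proof -
  have "x + x = scale (1 + 1) x" by (simp only: scale_left_distrib scale_one)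
  also have "\<dots> = 0" by simp
  finally show ?thesis unfolding assoc_bilinear_def by simp
qed

lemma Q_add: "Q (x + y) = Q x + Q y + B x y"
  unfolding assoc_bilinear_def by algebra

lemma B_zero_left [simp]: "B 0 y = 0"
  using B_add_left[of 0 0 y] by simp

lemma B_sum_left: "B (sum f A) y = (\<Sum>a\<in>A. B (f a) y)"
  by (induction A rule: infinite_finite_induct) (auto simp: B_add_left)

lemma B_sum_right: "B y (sum f A) = (\<Sum>a\<in>A. B y (f a))"
  using B_sum_left by (simp add: assoc_bilinear_commute)

lemma independent_if_pairwise_one:
  assumes S: "finite S" "even (card S)" and one: "\<forall>x\<in>S. \<forall>y\<in>S. x \<noteq> y \<longrightarrow> B x y = 1"
  shows "independent S"
proof
  assume "dependent S"
  then obtain w where nonzero: "\<exists>x\<in>S. w x \<noteq> 0" and relation: "(\<Sum>x\<in>S. scale (w x) x) = 0"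
    using dependent_finite[OF S(1)] by blast
  define \<sigma> where "\<sigma> = (\<Sum>x\<in>S. w x)"
  have coeff: "w l = \<sigma>" if l: "l \<in> S" for l
  proof -
    have "0 = B (\<Sum>x\<in>S. scale (w x) x) l" using relation by simp
    also have "\<dots> = (\<Sum>x\<in>S. if x = l then 0 else w x)"
      unfolding B_sum_left B_scale_left using l one by (intro sum.cong) auto
    also have "\<dots> = (\<Sum>x\<in>S - {l}. w x)"
      using S(1) by (simp add: sum.If_cases Diff_eq)
    finally show ?thesis
      unfolding \<sigma>_def using S(1) l by (simp add: sum.remove)
  qed
  have "\<sigma> = (\<Sum>x\<in>S. w x)" by (simp only: \<sigma>_def)
  also have "\<dots> = (\<Sum>x\<in>S. \<sigma>)" using coeff by (rule sum.cong[OF refl])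
  also have "\<dots> = of_nat (card S) * \<sigma>" by simp
  also have "\<dots> = 0" using S(2) by (simp add: of_nat_bit)
  finally show False using nonzero coeff by auto
qed

lemma span_eq_UNIV_if_card_eq_dim:
  assumes "independent S" "finite S" "card S = dim UNIV" "dim UNIV > 0"
  shows "span S = UNIV"
proof (rule ccontr)
  assume "span S \<noteq> UNIV"
  then obtain a where a: "a \<notin> span S" by auto
  then have "independent (insert a S)" using assms(1) by (simp add: independent_insertI)
  moreover obtain T where "independent T" "UNIV \<subseteq> span T" "card T = dim UNIV"
    using basis_exists[of UNIV] by auto
  moreover have "finite T" using \<open>card T = dim UNIV\<close> assms(4) by (metis card_ge_0_finite)
  ultimately have "card (insert a S) \<le> card S"
    using independent_span_bound[of T "insert a S"] assms(3) by auto
  moreover have "a \<notin> S" using a span_base by blast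
  ultimately show False using assms(2) by simp
qed

lemma basis_family_if_pairwise_one:
  assumes "dim UNIV = N" "N > 0" "even N" "\<forall>k<N. \<forall>l<N. k \<noteq> l \<longrightarrow> B (v k) (v l) = 1"
  shows "is_basis_family scale N v"
proof -
  have inj: "inj_on v {..<N}"
    using assms(4) by (intro inj_onI) (metis B_self lessThan_iff zero_neq_one)
  then have card: "card (v ` {..<N}) = N" by (simp add: card_image)
  moreover have indep: "independent (v ` {..<N})"
    using assms(3,4) card by (intro independent_if_pairwise_one) auto
  ultimately have "span (v ` {..<N}) = UNIV"
    using assms(1,2) by (intro span_eq_UNIV_if_card_eq_dim) auto
  with inj indep show ?thesis unfolding is_basis_family_def by simp
qed

lemma orthogonal_planesD:
  assumes "orthogonal_planes Q n c p q" "b < n" "d < n"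
  shows "Q (p b) = c b" "Q (q b) = c b"
    and "B (p b) (q d) = (if b = d then 1 else 0)" "B (q b) (p d) = (if b = d then 1 else 0)"
    and "B (p b) (p d) = 0" "B (q b) (q d) = 0"
  using assms B_self unfolding orthogonal_planes_def by (metis assoc_bilinear_commute)+

lemma Q_sum_orthogonal:
  assumes "finite A" "\<forall>a\<in>A. \<forall>b\<in>A. a \<noteq> b \<longrightarrow> B (f a) (f b) = 0"
  shows "Q (sum f A) = (\<Sum>a\<in>A. Q (f a))"
  using assms
proof (induction A rule: finite_induct)
  case (insert x F)
  then have "B (f x) (sum f F) = 0" by (auto simp: B_sum_right intro!: sum.neutral)
  with insert show ?case by (simp add: Q_add)
qed simp

lemma orthogonal_planes_partial_sums:
  assumes planes: "orthogonal_planes Q n c p q"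
  shows "b \<le> n \<Longrightarrow> b' \<le> n \<Longrightarrow> B (\<Sum>d<b. p d + q d) (\<Sum>d<b'. p d + q d) = 0"
    and "b \<le> n \<Longrightarrow> Q (\<Sum>d<b. p d + q d) = of_nat b"
proof -
  note planesD = orthogonal_planesD[OF planes]
  show "B (\<Sum>d<b. p d + q d) (\<Sum>d<b'. p d + q d) = 0" if "b \<le> n" "b' \<le> n"
    using that unfolding B_sum_left B_sum_right
    by (intro sum.neutral ballI) (auto simp: B_add_left B_add_right planesD)
  assume "b \<le> n"
  then have "Q (\<Sum>d<b. p d + q d) = (\<Sum>d<b. Q (p d + q d))"
    by (intro Q_sum_orthogonal) (auto simp: B_add_left B_add_right planesD)
  also have "\<dots> = (\<Sum>d<b. 1)"
  proof (intro sum.cong refl)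
    fix d assume "d \<in> {..<b}"
    with \<open>b \<le> n\<close> have "d < n" by simp
    then show "Q (p d + q d) = 1" by (simp add: Q_add planesD)
  qed
  finally show "Q (\<Sum>d<b. p d + q d) = of_nat b" by simp
qed

lemma orthogonal_planes_interleave:
  assumes planes: "orthogonal_planes Q n c p q" and "k < 2*n" "l < 2*n"
  shows "Q (interleave p q k) = c (k div 2)"
    and "B (interleave p q k) (interleave p q l) = (if k div 2 = l div 2 \<and> k \<noteq> l then 1 else 0)"
    and "b \<le> n \<Longrightarrow> B (interleave p q k) (\<Sum>d<b. p d + q d) = (if k div 2 < b then 1 else 0)"
proof -
  note planesD = orthogonal_planesD[OF planes]
  have half: "k div 2 < n" "l div 2 < n"
    using assms(2,3) by linarith+
  show "Q (interleave p q k) = c (k div 2)"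
    using planesD(1,2)[OF half(1) half(1)] by (simp add: interleave_def)
  have "k = l \<longleftrightarrow> k div 2 = l div 2 \<and> (even k \<longleftrightarrow> even l)" by presburger
  with half show "B (interleave p q k) (interleave p q l) = (if k div 2 = l div 2 \<and> k \<noteq> l then 1 else 0)"
    by (auto simp: interleave_def planesD)
  assume "b \<le> n"
  then have "B (interleave p q k) (\<Sum>d<b. p d + q d) = (\<Sum>d<b. if d = k div 2 then 1 else 0)"
    unfolding B_sum_right using half
    by (intro sum.cong) (auto simp: interleave_def B_add_right planesD)
  then show "B (interleave p q k) (\<Sum>d<b. p d + q d) = (if k div 2 < b then 1 else 0)" by simp
qed

text \<open>With \<open>T b\<close> the sum of the planes below \<open>b\<close>, \<open>Q (T b) = b mod 2 = Q (p b) = Q (q b)\<close>,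
  which makes the shifted vectors isotropic.\<close>
lemma alternating_planes_symmetric_family:
  assumes planes: "orthogonal_planes Q n of_nat p q"
  shows "\<exists>v. (\<forall>k<2*n. Q (v k) = 0) \<and> (\<forall>k<2*n. \<forall>l<2*n. k \<noteq> l \<longrightarrow> B (v k) (v l) = 1)"
proof -
  define T where "T b = (\<Sum>d<b. p d + q d)" for b
  define v where "v k = interleave p q k + T (k div 2)" for k
  have half: "k div 2 \<le> n" if "k < 2*n" for k
    using that by linarith
  note sums = orthogonal_planes_partial_sums[OF planes, folded T_def]
    and interleave = orthogonal_planes_interleave[OF planes, folded T_def]
  show ?thesis
  proof (intro exI[of _ v] conjI allI impI)
    fix k assume "k < 2*n"
    then show "Q (v k) = 0"
      by (simp add: v_def Q_add sums interleave half)
  next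
    fix k l assume "k < 2*n" "l < 2*n" "k \<noteq> l"
    then show "B (v k) (v l) = 1"
      by (auto simp: v_def B_add_left B_add_right sums interleave half
          assoc_bilinear_commute[of Q "T _" "interleave p q _"])
  qed
qed

text \<open>Two orthogonal hyperbolic planes with hyperbolic pairs \<open>(e\<^sub>1, f\<^sub>1)\<close>, \<open>(e\<^sub>2, f\<^sub>2)\<close> are also
  the orthogonal sum of the elliptic planes spanned by \<open>e\<^sub>1 + f\<^sub>1, e\<^sub>1 + e\<^sub>2 + f\<^sub>2\<close> and
  by \<open>e\<^sub>2 + f\<^sub>2, e\<^sub>1 + f\<^sub>1 + e\<^sub>2\<close>.\<close>
lemma orthogonal_planes_hyperbolic_pair_to_elliptic:
  assumes planes: "orthogonal_planes Q n c p q"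
    and ij: "i < n" "j < n" "i \<noteq> j" and hyperbolic: "c i = 0" "c j = 0"
  shows "orthogonal_planes Q n (c(i := 1, j := 1))
           (p(i := p i + q i, j := p j + q j)) (q(i := p i + p j + q j, j := p i + q i + p j))"
proof -
  note D = orthogonal_planesD[OF planes]
  define p' where "p' = p(i := p i + q i, j := p j + q j)"
  define q' where "q' = q(i := p i + p j + q j, j := p i + q i + p j)"
  note simps = p'_def q'_def B_add_left B_add_right Q_add D
  have "B (p' b) (q' b) = 1 \<and> Q (p' b) = (c(i := 1, j := 1)) b \<and> Q (q' b) = (c(i := 1, j := 1)) b"
    if "b < n" for b
    using that ij hyperbolic by (cases "b = i"; cases "b = j") (simp_all add: simps)
  moreover have "B (p' b) (p' d) = 0 \<and> B (p' b) (q' d) = 0 \<and> B (q' b) (q' d) = 0"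
    if "b < n" "d < n" "b \<noteq> d" for b d
    using that ij by (cases "b = i"; cases "b = j"; cases "d = i"; cases "d = j") (simp_all add: simps)
  ultimately show ?thesis unfolding orthogonal_planes_def p'_def q'_def by blast
qed

lemma alternating_planes_from_hyperbolic_block:
  assumes "orthogonal_planes Q n c p q" "4*a \<le> n" "\<forall>b<n. c b = (if b < 4*a then 0 else of_nat b)"
  shows "\<exists>p q. orthogonal_planes Q n of_nat p q"
  using assms
proof (induction a arbitrary: c p q)
  case 0
  then have "c b = of_nat b" if "b < n" for b using that by simp
  with 0 show ?case unfolding orthogonal_planes_def by metis
next
  case (Suc a)
  let ?i = "4*a + 1" and ?j = "4*a + 3"
  have "orthogonal_planes Q n (c(?i := 1, ?j := 1))
      (p(?i := p ?i + q ?i, ?j := p ?j + q ?j)) (q(?i := p ?i + p ?j + q ?j, ?j := p ?i + q ?i + p ?j))"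
    using Suc.prems by (intro orthogonal_planes_hyperbolic_pair_to_elliptic) auto
  moreover have "\<forall>b<n. (c(?i := 1, ?j := 1)) b = (if b < 4*a then 0 else of_nat b)"
  proof (intro allI impI)
    fix b assume "b < n"
    consider "b < 4*a" | "b = 4*a" | "b = ?i" | "b = 4*a + 2" | "b = ?j" | "4*a + 4 \<le> b"
      by linarith
    then show "(c(?i := 1, ?j := 1)) b = (if b < 4*a then 0 else of_nat b)"
      using \<open>b < n\<close> Suc.prems(3) by cases (auto simp: of_nat_bit)
  qed
  ultimately show ?case using Suc.IH Suc.prems(2) by simp
qed

lemma symmetric_basis_from_hyperbolic_block:
  assumes "dim UNIV = 2*r" "r \<ge> 1"
    and "orthogonal_planes Q r (\<lambda>b. if b < 4*a then 0 else of_nat b) p q" "4*a \<le> r"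
  shows "has_symmetric_basis scale (2*r) Q"
proof -
  obtain p' q' where "orthogonal_planes Q r of_nat p' q'"
    using alternating_planes_from_hyperbolic_block[OF assms(3,4)] by auto
  then obtain v where v: "\<forall>k<2*r. Q (v k) = 0" "\<forall>k<2*r. \<forall>l<2*r. k \<noteq> l \<longrightarrow> B (v k) (v l) = 1"
    using alternating_planes_symmetric_family by blast
  then have "is_basis_family scale (2*r) v"
    using assms(1,2) by (intro basis_family_if_pairwise_one) auto
  with v show ?thesis unfolding has_symmetric_basis_def by blast
qed

lemma hyperbolic_symmetric_basis:
  assumes "dim UNIV = 2*r" "r \<ge> 1" "hyperbolic scale r Q" "r mod 4 = 0 \<or> r mod 4 = 1"
  shows "has_symmetric_basis scale (2*r) Q"
proof -
  define a where "a = r div 4"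
  obtain p q where planes: "orthogonal_planes Q r (\<lambda>_. 0) p q"
    using hyperbolic_orthogonal_planes[OF assms(3)] by blast
  have "(0::bit) = (if b < 4*a then 0 else of_nat b)" if "b < r" for b
  proof -
    from assms(4) that have "b < 4*a \<or> b = 4*a" unfolding a_def by presburger
    then show ?thesis by (auto simp: of_nat_bit)
  qed
  with planes have "orthogonal_planes Q r (\<lambda>b. if b < 4*a then 0 else of_nat b) p q"
    by (blast intro: orthogonal_planes_cong)
  then show ?thesis
    by (rule symmetric_basis_from_hyperbolic_block[OF assms(1,2)]) (simp add: a_def)
qed

text \<open>For \<open>r \<equiv> 3 (mod 4)\<close> the elliptic plane is moved from position \<open>r - 1\<close> to the odd
  position \<open>r - 2\<close>.\<close>
lemma elliptic_symmetric_basis: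
  assumes "dim UNIV = 2*r" "r \<ge> 1" "elliptic scale r Q" "r mod 4 = 2 \<or> r mod 4 = 3"
  shows "has_symmetric_basis scale (2*r) Q"
proof -
  define a where "a = r div 4"
  define c where "c b = (if b = r - 1 then 1 else 0 :: bit)" for b
  obtain p q where planes: "orthogonal_planes Q r c p q"
    using elliptic_orthogonal_planes assms(2,3) unfolding c_def by blast
  show ?thesis
  proof (cases "r mod 4 = 2")
    case True
    then have "r = 4*a + 2" unfolding a_def by presburger
    have "c b = (if b < 4*a then 0 else of_nat b)" if "b < r" for b
    proof -
      from \<open>r = 4*a + 2\<close> that consider "b < 4*a" | "b = 4*a" | "b = 4*a + 1" by linarith
      then show ?thesis using \<open>r = 4*a + 2\<close> by cases (simp_all add: c_def of_nat_bit)
    qed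
    with planes have "orthogonal_planes Q r (\<lambda>b. if b < 4*a then 0 else of_nat b) p q"
      by (blast intro: orthogonal_planes_cong)
    then show ?thesis
      by (rule symmetric_basis_from_hyperbolic_block[OF assms(1,2)]) (simp add: a_def)
  next
    case False
    with assms(4) have "r = 4*a + 3" unfolding a_def by presburger
    let ?\<sigma> = "transpose (r - 2) (r - 1)"
    have "orthogonal_planes Q r (c \<circ> ?\<sigma>) (p \<circ> ?\<sigma>) (q \<circ> ?\<sigma>)"
      using planes assms(2) by (intro orthogonal_planes_reindex) auto
    moreover have "(c \<circ> ?\<sigma>) b = (if b < 4*a then 0 else of_nat b)" if "b < r" for b
    proof -
      from \<open>r = 4*a + 3\<close> that
      consider "b < 4*a" | "b = 4*a" | "b = 4*a + 1" | "b = 4*a + 2" by linarith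
      then show ?thesis
        using \<open>r = 4*a + 3\<close> by cases (simp_all add: c_def of_nat_bit transpose_def)
    qed
    ultimately have "orthogonal_planes Q r (\<lambda>b. if b < 4*a then 0 else of_nat b) (p \<circ> ?\<sigma>) (q \<circ> ?\<sigma>)"
      by (blast intro: orthogonal_planes_cong)
    then show ?thesis
      by (rule symmetric_basis_from_hyperbolic_block[OF assms(1,2)]) (simp add: a_def)
  qed
qed

end

theorem lemma3p3:
  fixes scale :: "bit \<Rightarrow> 'v::ab_group_add \<Rightarrow> 'v"
    and Q :: "'v \<Rightarrow> bit" and r :: nat
  assumes "vector_space scale"
    and "vector_space.dim scale (UNIV :: 'v set) = 2 * r"
    and "r \<ge> 1"
    and "quadratic_form scale Q"
    and "nondegenerate Q"
  shows "(hyperbolic scale r Q \<and> (r mod 4 = 0 \<or> r mod 4 = 1) \<longrightarrow> has_symmetric_basis scale (2*r) Q)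
       \<and> (elliptic scale r Q \<and> (r mod 4 = 2 \<or> r mod 4 = 3) \<longrightarrow> has_symmetric_basis scale (2*r) Q)"
proof -
  interpret quadratic_space scale Q
    using assms(1,4) by (simp add: quadratic_space_def quadratic_space_axioms_def)
  show ?thesis
    using assms(2,3) by (auto intro: hyperbolic_symmetric_basis elliptic_symmetric_basis)
qed

end
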